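(* Let $f\colon[a,b]\to\mathbb{R}$ be Laplace integrable on $[a,b]$ and let $\{g_n\}$ be a sequence of functions of bounded variation on $[a,b]$ with $\sup_nV(g_n,[a,b])<\infty$ that converges pointwise on $[a,b]$ to a function $g$. Let $G_n(x)=\int_a^xg_n$ and $G(x)=\int_a^xg$. Then $\lim_{n\to\infty}\int_a^bfG_n=\int_a^bfG$.
   Context: Laplace integral on $[a,b]$: with lower/upper Laplace derivates $\underline{LD}_1F(x)$, $\overline{LD}_1F(x)$ being the minimum of the $\liminf$'s, resp. maximum of the $\limsup$'s, as $s\to\infty$ of $s^2\int_0^\delta e^{-st}[F(x+t)-F(x)]dt$ and $(-s^2)\int_0^\delta e^{-st}[F(x-t)-F(x)]dt$ (one-sided at endpoints), a major function of $f$ is a continuous $U$ with $\underline{LD}_1U\geqslant f$, $\underline{LD}_1U>-\infty$ everywhere on $[a,b]$, a minor function a continuous $V$ with $\overline{LD}_1V\leqslant f$, $\overline{LD}_1V<\infty$ everywhere, and $f$ is Laplace integrable if $\sup_V(V(b)-V(a))=\inf_U(U(b)-U(a))$ is finite, this value being $\int_a^bf$. $V(g_n,[a,b])$ is the total variation of $g_n$ on $[a,b]$ ("uniform bounded variation"). *)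

theory Defs
  imports "HOL-Analysis.Analysis"
begin

definition partitions :: "real \<Rightarrow> real \<Rightarrow> real list set" where
  "partitions a b = {xs. xs \<noteq> [] \<and> hd xs = a \<and> last xs = b \<and> sorted_wrt (<) xs}"

definition variation_sum :: "(real \<Rightarrow> real) \<Rightarrow> real list \<Rightarrow> real" where
  "variation_sum g xs = (\<Sum>i<length xs - 1. \<bar>g (xs ! Suc i) - g (xs ! i)\<bar>)"

definition total_variation :: "(real \<Rightarrow> real) \<Rightarrow> real \<Rightarrow> real \<Rightarrow> ereal" where
  "total_variation g a b = (SUP xs\<in>partitions a b. ereal (variation_sum g xs))"

definition bounded_variation_on :: "(real \<Rightarrow> real) \<Rightarrow> real \<Rightarrow> real \<Rightarrow> bool" where
  "bounded_variation_on g a b \<longleftrightarrow> total_variation g a b < \<infinity>"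

text \<open>Right and left Laplace expressions at x, with delta = b - x (resp. x - a).
  The limits inferior/superior as s tends to infinity do not depend on the choice of delta > 0.\<close>

definition laplace_right :: "real \<Rightarrow> (real \<Rightarrow> real) \<Rightarrow> real \<Rightarrow> real \<Rightarrow> real" where
  "laplace_right b F x s =
     s\<^sup>2 * integral {0..b - x} (\<lambda>t. exp (- s * t) * (F (x + t) - F x))"

definition laplace_left :: "real \<Rightarrow> (real \<Rightarrow> real) \<Rightarrow> real \<Rightarrow> real \<Rightarrow> real" where
  "laplace_left a F x s =
     - (s\<^sup>2) * integral {0..x - a} (\<lambda>t. exp (- s * t) * (F (x - t) - F x))"

definition lower_LD :: "real \<Rightarrow> real \<Rightarrow> (real \<Rightarrow> real) \<Rightarrow> real \<Rightarrow> ereal" where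
  "lower_LD a b F x =
     (if x = a then Liminf at_top (\<lambda>s. ereal (laplace_right b F x s))
      else if x = b then Liminf at_top (\<lambda>s. ereal (laplace_left a F x s))
      else min (Liminf at_top (\<lambda>s. ereal (laplace_right b F x s)))
               (Liminf at_top (\<lambda>s. ereal (laplace_left a F x s))))"

definition upper_LD :: "real \<Rightarrow> real \<Rightarrow> (real \<Rightarrow> real) \<Rightarrow> real \<Rightarrow> ereal" where
  "upper_LD a b F x =
     (if x = a then Limsup at_top (\<lambda>s. ereal (laplace_right b F x s))
      else if x = b then Limsup at_top (\<lambda>s. ereal (laplace_left a F x s))
      else max (Limsup at_top (\<lambda>s. ereal (laplace_right b F x s)))
               (Limsup at_top (\<lambda>s. ereal (laplace_left a F x s))))"

definition laplace_major :: "real \<Rightarrow> real \<Rightarrow> (real \<Rightarrow> real) \<Rightarrow> (real \<Rightarrow> real) \<Rightarrow> bool" where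
  "laplace_major a b f U \<longleftrightarrow> continuous_on {a..b} U \<and>
     (\<forall>x\<in>{a..b}. lower_LD a b U x \<ge> ereal (f x) \<and> lower_LD a b U x > -\<infinity>)"

definition laplace_minor :: "real \<Rightarrow> real \<Rightarrow> (real \<Rightarrow> real) \<Rightarrow> (real \<Rightarrow> real) \<Rightarrow> bool" where
  "laplace_minor a b f V \<longleftrightarrow> continuous_on {a..b} V \<and>
     (\<forall>x\<in>{a..b}. upper_LD a b V x \<le> ereal (f x) \<and> upper_LD a b V x < \<infinity>)"

definition laplace_upper :: "real \<Rightarrow> real \<Rightarrow> (real \<Rightarrow> real) \<Rightarrow> ereal" where
  "laplace_upper a b f = (INF U\<in>{U. laplace_major a b f U}. ereal (U b - U a))"

definition laplace_lower :: "real \<Rightarrow> real \<Rightarrow> (real \<Rightarrow> real) \<Rightarrow> ereal" where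
  "laplace_lower a b f = (SUP V\<in>{V. laplace_minor a b f V}. ereal (V b - V a))"

definition laplace_integrable :: "real \<Rightarrow> real \<Rightarrow> (real \<Rightarrow> real) \<Rightarrow> bool" where
  "laplace_integrable a b f \<longleftrightarrow>
     laplace_lower a b f = laplace_upper a b f \<and> \<bar>laplace_upper a b f\<bar> \<noteq> \<infinity>"

definition laplace_integral :: "real \<Rightarrow> real \<Rightarrow> (real \<Rightarrow> real) \<Rightarrow> real" where
  "laplace_integral a b f = real_of_ereal (laplace_upper a b f)"

end

theory Submission
  imports Defs "HOL-Real_Asymp.Real_Asymp"
begin

text \<open>Let \<open>U\<close> be a major and \<open>V\<close> a minor function of \<open>f\<close>, both vanishing at \<open>a\<close>, with
  \<open>U b - V b \<le> \<epsilon>\<close>; then \<open>0 \<le> U - V \<le> \<epsilon>\<close>, since Laplace derivates obey a monotonicity theorem.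
  For \<open>\<bar>h\<bar> \<le> K\<close> and \<open>H = \<integral>\<^sub>a h\<close>, so \<open>\<bar>H\<bar> \<le> C = K (b - a)\<close>, a product rule for Laplace
  derivates makes \<open>U (H + C) - \<integral>\<^sub>a U h - C V\<close> a major and \<open>V (H + C) - \<integral>\<^sub>a V h - C U\<close> a minor
  function of \<open>f H\<close>.  Their values at \<open>b\<close> differ by at most \<open>4 \<epsilon> C\<close>, so \<open>f H\<close> is Laplace integrable
  and its integral is approximated, uniformly in \<open>h\<close>, by an expression involving \<open>h\<close> only through
  \<open>\<integral> h\<close> and \<open>\<integral> U h\<close>.  A sequence \<open>g\<^sub>n\<close> of uniformly bounded variation converging pointwise is
  uniformly bounded, so bounded convergence of these two integrals gives the theorem.\<close>

section \<open>Laplace difference quotients\<close>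

text \<open>As \<open>s\<^sup>2 t exp (- s t)\<close> is a probability density on \<open>[0, \<infinity>)\<close> concentrating at \<open>0\<close> as
  \<open>s \<rightarrow> \<infinity>\<close>, this is an average of \<open>R t / t\<close> over small \<open>t\<close>.\<close>

definition laplace_quotient :: "real \<Rightarrow> (real \<Rightarrow> real) \<Rightarrow> real \<Rightarrow> real" where
  "laplace_quotient d R s = s\<^sup>2 * integral {0..d} (\<lambda>t. exp (- s * t) * R t)"

lemma laplace_right_eq_quotient:
  "laplace_right b F x s = laplace_quotient (b - x) (\<lambda>t. F (x + t) - F x) s"
  unfolding laplace_right_def laplace_quotient_def ..

lemma laplace_left_eq_quotient:
  "laplace_left a F x s = - laplace_quotient (x - a) (\<lambda>t. F (x - t) - F x) s"
  unfolding laplace_left_def laplace_quotient_def by simp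

lemma laplace_quotient_cmult: "laplace_quotient d (\<lambda>t. c * R t) s = c * laplace_quotient d R s"
  unfolding laplace_quotient_def by (simp add: algebra_simps)

lemma laplace_quotient_uminus: "laplace_quotient d (\<lambda>t. - R t) s = - laplace_quotient d R s"
  using laplace_quotient_cmult[of d "- 1" R s] by simp

lemma laplace_quotient_add:
  assumes "continuous_on {0..d} R" "continuous_on {0..d} Q"
  shows "laplace_quotient d (\<lambda>t. R t + Q t) s = laplace_quotient d R s + laplace_quotient d Q s"
proof -
  have "integral {0..d} (\<lambda>t. exp (- s * t) * R t + exp (- s * t) * Q t)
      = integral {0..d} (\<lambda>t. exp (- s * t) * R t) + integral {0..d} (\<lambda>t. exp (- s * t) * Q t)"
    by (intro integral_add integrable_continuous_interval continuous_intros assms)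
  then show ?thesis
    unfolding laplace_quotient_def by (simp add: algebra_simps)
qed

lemma laplace_quotient_diff:
  assumes "continuous_on {0..d} R" "continuous_on {0..d} Q"
  shows "laplace_quotient d (\<lambda>t. R t - Q t) s = laplace_quotient d R s - laplace_quotient d Q s"
  using laplace_quotient_add[of d R "\<lambda>t. - Q t" s] assms
  by (simp add: laplace_quotient_uminus continuous_on_minus)

lemma laplace_quotient_ident:
  fixes s d :: real
  assumes "s > 0" "d \<ge> 0"
  shows "laplace_quotient d (\<lambda>t. t) s = 1 - (s * d + 1) * exp (- s * d)"
proof -
  define P where "P t = - (t / s + 1 / s\<^sup>2) * exp (- s * t)" for t
  have "((\<lambda>t. exp (- s * t) * t) has_integral (P d - P 0)) {0..d}"
  proof (rule fundamental_theorem_of_calculus[OF \<open>d \<ge> 0\<close>])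
    fix t :: real
    have "(P has_real_derivative exp (- s * t) * t) (at t within {0..d})"
      unfolding P_def using \<open>s > 0\<close>
      by (auto intro!: derivative_eq_intros simp: field_simps power2_eq_square)
    then show "(P has_vector_derivative exp (- s * t) * t) (at t within {0..d})"
      by (simp add: has_real_derivative_iff_has_vector_derivative)
  qed
  then have "integral {0..d} (\<lambda>t. exp (- s * t) * t) = P d - P 0"
    by (rule integral_unique)
  then show ?thesis
    using \<open>s > 0\<close> unfolding laplace_quotient_def P_def by (simp add: field_simps power2_eq_square)
qed

lemma laplace_quotient_ident_le_1:
  assumes "s > 0" "d \<ge> 0"
  shows "laplace_quotient d (\<lambda>t. t) s \<le> 1"
  using assms by (simp add: laplace_quotient_ident)

lemma laplace_quotient_ident_tendsto_1:
  assumes "d > 0"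
  shows "(laplace_quotient d (\<lambda>t. t) \<longlongrightarrow> 1) at_top"
proof -
  have "((\<lambda>s. 1 - (s * d + 1) * exp (- s * d)) \<longlongrightarrow> 1) at_top"
    using assms by real_asymp
  moreover have "eventually (\<lambda>s. 1 - (s * d + 1) * exp (- s * d) = laplace_quotient d (\<lambda>t. t) s) at_top"
    using eventually_gt_at_top[of 0] by eventually_elim (use assms in \<open>simp add: laplace_quotient_ident\<close>)
  ultimately show ?thesis by (rule Lim_transform_eventually)
qed

lemma laplace_quotient_le_near_far:
  assumes "s > 0" "d \<ge> 0" "\<eta> \<ge> 0" "B \<ge> 0" and R: "continuous_on {0..d} R"
    and near: "\<And>t. t \<in> {0..d} \<Longrightarrow> t \<le> h \<Longrightarrow> R t \<le> \<eta> * t"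
    and far: "\<And>t. t \<in> {0..d} \<Longrightarrow> R t \<le> B"
  shows "laplace_quotient d R s \<le> \<eta> * laplace_quotient d (\<lambda>t. t) s + B * d * (s\<^sup>2 * exp (- s * h))"
proof -
  have pointwise: "exp (- s * t) * R t \<le> \<eta> * (exp (- s * t) * t) + B * exp (- s * h)"
    if t: "t \<in> {0..d}" for t
  proof (cases "t \<le> h")
    case True
    then have "exp (- s * t) * R t \<le> exp (- s * t) * (\<eta> * t)"
      using near t by (intro mult_left_mono) auto
    also have "\<dots> = \<eta> * (exp (- s * t) * t)" by (rule mult.left_commute)
    finally show ?thesis using \<open>B \<ge> 0\<close> by (simp add: add_increasing2)
  next
    case False
    have "exp (- s * t) * R t \<le> exp (- s * t) * B"
      using far[OF t] by (intro mult_left_mono) auto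
    also have "\<dots> \<le> exp (- s * h) * B"
      using False \<open>s > 0\<close> \<open>B \<ge> 0\<close> by (intro mult_right_mono) auto
    finally have "exp (- s * t) * R t \<le> B * exp (- s * h)" by (simp only: mult.commute)
    moreover have "0 \<le> \<eta> * (exp (- s * t) * t)" using \<open>\<eta> \<ge> 0\<close> t by simp
    ultimately show ?thesis by linarith
  qed
  have "integral {0..d} (\<lambda>t. exp (- s * t) * R t)
      \<le> integral {0..d} (\<lambda>t. \<eta> * (exp (- s * t) * t) + B * exp (- s * h))"
    by (intro integral_le integrable_continuous_interval continuous_intros R pointwise)
  also have "\<dots> = \<eta> * integral {0..d} (\<lambda>t. exp (- s * t) * t) + B * exp (- s * h) * d"
  proof (subst integral_add)
    show "(\<lambda>t. \<eta> * (exp (- s * t) * t)) integrable_on {0..d}"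
      by (intro integrable_continuous_interval continuous_intros)
  qed (use \<open>d \<ge> 0\<close> in \<open>simp_all add: integrable_const_ivl\<close>)
  finally have "s\<^sup>2 * integral {0..d} (\<lambda>t. exp (- s * t) * R t)
      \<le> s\<^sup>2 * (\<eta> * integral {0..d} (\<lambda>t. exp (- s * t) * t) + B * exp (- s * h) * d)"
    by (rule mult_left_mono) simp
  then show ?thesis
    unfolding laplace_quotient_def by (simp add: algebra_simps)
qed

lemma eventually_laplace_quotient_le:
  assumes "d \<ge> 0" and R: "continuous_on {0..d} R" and "h > 0" "\<eta> \<ge> 0"
    and near: "\<And>t. t \<in> {0..d} \<Longrightarrow> t \<le> h \<Longrightarrow> R t \<le> \<eta> * t" and "e > 0"
  shows "eventually (\<lambda>s. laplace_quotient d R s \<le> \<eta> + e) at_top"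
proof -
  have "bounded (R ` {0..d})"
    by (intro compact_imp_bounded compact_continuous_image R compact_Icc)
  then obtain B where B: "\<And>t. t \<in> {0..d} \<Longrightarrow> \<bar>R t\<bar> \<le> B"
    unfolding bounded_iff by (metis image_eqI real_norm_def)
  have "((\<lambda>s. s\<^sup>2 * exp (- s * h)) \<longlongrightarrow> 0) at_top"
    using \<open>h > 0\<close> by real_asymp
  then have "((\<lambda>s. \<bar>B\<bar> * d * (s\<^sup>2 * exp (- s * h))) \<longlongrightarrow> 0) at_top"
    by (rule tendsto_mult_right_zero)
  then have "eventually (\<lambda>s. \<bar>B\<bar> * d * (s\<^sup>2 * exp (- s * h)) < e) at_top"
    using \<open>e > 0\<close> by (rule order_tendstoD)
  with eventually_gt_at_top[of 0] show ?thesis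
  proof eventually_elim
    case (elim s)
    have "laplace_quotient d R s
        \<le> \<eta> * laplace_quotient d (\<lambda>t. t) s + \<bar>B\<bar> * d * (s\<^sup>2 * exp (- s * h))"
    proof (intro laplace_quotient_le_near_far \<open>s > 0\<close> assms)
      show "R t \<le> \<bar>B\<bar>" if "t \<in> {0..d}" for t using B[OF that] by linarith
    qed auto
    also have "\<dots> \<le> \<eta> * 1 + e"
      using laplace_quotient_ident_le_1[OF \<open>s > 0\<close> \<open>d \<ge> 0\<close>] \<open>\<eta> \<ge> 0\<close> elim
      by (intro add_mono mult_left_mono) auto
    finally show ?case by simp
  qed
qed

lemma laplace_quotient_tendsto_0:
  assumes "d \<ge> 0" and E: "continuous_on {0..d} E" "E 0 = 0"
    and E': "(E has_real_derivative 0) (at 0 within {0..d})"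
  shows "(laplace_quotient d E \<longlongrightarrow> 0) at_top"
proof (rule tendstoI)
  fix e :: real assume "e > 0"
  obtain h where "h > 0" and h: "\<And>t. t \<in> {0..d} \<Longrightarrow> t < h \<Longrightarrow> \<bar>E t\<bar> \<le> e / 4 * t"
    using E' \<open>e > 0\<close> unfolding has_field_derivative_def has_derivative_within_alt
    by (force simp: \<open>E 0 = 0\<close> dest: spec[of _ "e / 4"])
  have near_0: "E t \<le> e / 4 * t" "- E t \<le> e / 4 * t" if "t \<in> {0..d}" "t \<le> h / 2" for t
    using h[of t] that \<open>h > 0\<close> by (auto simp: abs_le_iff)
  have "h / 2 > 0" "e / 4 \<ge> 0" "e / 4 > 0" using \<open>h > 0\<close> \<open>e > 0\<close> by auto
  note eventually_le = eventually_laplace_quotient_le[OF \<open>d \<ge> 0\<close> _ this(1,2) _ this(3)]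
  have "eventually (\<lambda>s. laplace_quotient d E s \<le> e / 4 + e / 4) at_top"
    by (rule eventually_le[OF E(1) near_0(1)])
  moreover have "eventually (\<lambda>s. laplace_quotient d (\<lambda>t. - E t) s \<le> e / 4 + e / 4) at_top"
    by (rule eventually_le[OF continuous_on_minus[OF E(1)] near_0(2)])
  ultimately show "eventually (\<lambda>s. dist (laplace_quotient d E s) 0 < e) at_top"
    by eventually_elim (use \<open>e > 0\<close> in \<open>auto simp: laplace_quotient_uminus dist_real_def\<close>)
qed

lemma laplace_quotient_tendsto_derivative:
  assumes "d > 0" and R: "continuous_on {0..d} R" "R 0 = 0"
    and R': "(R has_real_derivative D) (at 0 within {0..d})"
  shows "(laplace_quotient d R \<longlongrightarrow> D) at_top"
proof -
  define E where "E t = R t - D * t" for t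
  have E: "continuous_on {0..d} E" "E 0 = 0"
    unfolding E_def using R by (auto intro!: continuous_on_diff continuous_on_mult_left continuous_on_id)
  have "(E has_real_derivative 0) (at 0 within {0..d})"
    unfolding E_def using R' by (auto intro!: derivative_eq_intros)
  then have "((\<lambda>s. laplace_quotient d E s + D * laplace_quotient d (\<lambda>t. t) s) \<longlongrightarrow> 0 + D * 1) at_top"
    using \<open>d > 0\<close> E
    by (intro tendsto_intros laplace_quotient_tendsto_0 laplace_quotient_ident_tendsto_1) auto
  moreover have "laplace_quotient d R = (\<lambda>s. laplace_quotient d E s + D * laplace_quotient d (\<lambda>t. t) s)"
    using laplace_quotient_add[OF E(1), of "\<lambda>t. D * t"]
    by (simp add: E_def laplace_quotient_cmult continuous_on_mult_left fun_eq_iff)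
  ultimately show ?thesis by simp
qed

lemma continuous_on_right_increment:
  fixes F :: "real \<Rightarrow> real"
  assumes "continuous_on {a..b} F" "a \<le> x"
  shows "continuous_on {0..b - x} (\<lambda>t. F (x + t) - F x)"
proof -
  have "(\<lambda>t. x + t) ` {0..b - x} \<subseteq> {a..b}" using \<open>a \<le> x\<close> by auto
  then show ?thesis by (intro continuous_intros continuous_on_compose2[OF assms(1)]) auto
qed

lemma continuous_on_left_increment:
  fixes F :: "real \<Rightarrow> real"
  assumes "continuous_on {a..b} F" "x \<le> b"
  shows "continuous_on {0..x - a} (\<lambda>t. F (x - t) - F x)"
proof -
  have "(\<lambda>t. x - t) ` {0..x - a} \<subseteq> {a..b}" using \<open>x \<le> b\<close> by auto
  then show ?thesis by (intro continuous_intros continuous_on_compose2[OF assms(1)]) auto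
qed

lemma laplace_right_tendsto_derivative:
  assumes F: "continuous_on {a..b} F" "(F has_real_derivative D) (at x within {a..b})"
    and "a \<le> x" "x < b"
  shows "((\<lambda>s. laplace_right b F x s) \<longlongrightarrow> D) at_top"
proof -
  have shift: "(\<lambda>t. x + t) ` {0..b - x} \<subseteq> {a..b}" using \<open>a \<le> x\<close> by auto
  note continuous_on_right_increment[OF F(1) \<open>a \<le> x\<close>]
  moreover have "((\<lambda>t. F (x + t) - F x) has_real_derivative D) (at 0 within {0..b - x})"
  proof -
    have "(F has_real_derivative D) (at (x + 0) within (\<lambda>t. x + t) ` {0..b - x})"
      using DERIV_subset[OF F(2) shift] by simp
    moreover have "((\<lambda>t. x + t) has_real_derivative 1) (at 0 within {0..b - x})"
      by (auto intro!: derivative_eq_intros)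
    ultimately have "((\<lambda>t. F (x + t)) has_real_derivative D) (at 0 within {0..b - x})"
      using DERIV_image_chain by (force simp: o_def)
    then show ?thesis by (auto intro!: derivative_eq_intros)
  qed
  ultimately show ?thesis
    unfolding laplace_right_eq_quotient using \<open>x < b\<close>
    by (intro laplace_quotient_tendsto_derivative) auto
qed

lemma laplace_left_tendsto_derivative:
  assumes F: "continuous_on {a..b} F" "(F has_real_derivative D) (at x within {a..b})"
    and "a < x" "x \<le> b"
  shows "((\<lambda>s. laplace_left a F x s) \<longlongrightarrow> D) at_top"
proof -
  have shift: "(\<lambda>t. x - t) ` {0..x - a} \<subseteq> {a..b}" using \<open>x \<le> b\<close> by auto
  note continuous_on_left_increment[OF F(1) \<open>x \<le> b\<close>]
  moreover have "((\<lambda>t. F (x - t) - F x) has_real_derivative - D) (at 0 within {0..x - a})"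
  proof -
    have "(F has_real_derivative D) (at (x - 0) within (\<lambda>t. x - t) ` {0..x - a})"
      using DERIV_subset[OF F(2) shift] by simp
    moreover have "((\<lambda>t. x - t) has_real_derivative - 1) (at 0 within {0..x - a})"
      by (auto intro!: derivative_eq_intros)
    ultimately have "((\<lambda>t. F (x - t)) has_real_derivative - D) (at 0 within {0..x - a})"
      using DERIV_image_chain by (force simp: o_def)
    then show ?thesis by (auto intro!: derivative_eq_intros)
  qed
  ultimately have "(laplace_quotient (x - a) (\<lambda>t. F (x - t) - F x) \<longlongrightarrow> - D) at_top"
    using \<open>a < x\<close> by (intro laplace_quotient_tendsto_derivative) auto
  then show ?thesis
    unfolding laplace_left_eq_quotient by (auto intro: tendsto_minus_cancel_left[THEN iffD1])
qed

lemma laplace_right_cmult: "laplace_right b (\<lambda>y. c * F y) x s = c * laplace_right b F x s"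
  unfolding laplace_right_eq_quotient laplace_quotient_cmult[symmetric]
  by (simp add: right_diff_distrib)

lemma laplace_left_cmult: "laplace_left a (\<lambda>y. c * F y) x s = c * laplace_left a F x s"
  using laplace_quotient_cmult[of "x - a" c "\<lambda>t. F (x - t) - F x" s]
  unfolding laplace_left_eq_quotient by (simp add: right_diff_distrib)

lemma laplace_right_uminus: "laplace_right b (\<lambda>y. - F y) x s = - laplace_right b F x s"
  using laplace_right_cmult[of b "- 1" F x s] by simp

lemma laplace_left_uminus: "laplace_left a (\<lambda>y. - F y) x s = - laplace_left a F x s"
  using laplace_left_cmult[of a "- 1" F x s] by simp

lemma laplace_right_diff_const: "laplace_right b (\<lambda>y. F y - k) x s = laplace_right b F x s"
  unfolding laplace_right_def by simp

lemma laplace_left_diff_const: "laplace_left a (\<lambda>y. F y - k) x s = laplace_left a F x s"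
  unfolding laplace_left_def by simp

lemma laplace_right_diff:
  assumes "continuous_on {a..b} F" "continuous_on {a..b} G" "a \<le> x"
  shows "laplace_right b (\<lambda>y. F y - G y) x s = laplace_right b F x s - laplace_right b G x s"
  using laplace_quotient_diff[OF continuous_on_right_increment[OF assms(1,3)]
      continuous_on_right_increment[OF assms(2,3)]]
  unfolding laplace_right_eq_quotient by (simp add: algebra_simps)

lemma laplace_left_diff:
  assumes "continuous_on {a..b} F" "continuous_on {a..b} G" "x \<le> b"
  shows "laplace_left a (\<lambda>y. F y - G y) x s = laplace_left a F x s - laplace_left a G x s"
  using laplace_quotient_diff[OF continuous_on_left_increment[OF assms(1,3)]
      continuous_on_left_increment[OF assms(2,3)]]
  unfolding laplace_left_eq_quotient by (simp add: algebra_simps)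

section \<open>Major and minor functions\<close>

lemma lower_LD_uminus: "lower_LD a b (\<lambda>y. - F y) x = - upper_LD a b F x"
proof -
  have max: "- max p q = min (- p) (- q)" for p q :: ereal
    by (cases p q rule: linorder_le_cases) (auto simp: max_def min_def)
  have Liminf: "Liminf at_top (\<lambda>s. ereal (- X s)) = - Limsup at_top (\<lambda>s. ereal (X s))" for X
    using ereal_Liminf_uminus[of at_top "\<lambda>s. ereal (X s)"] by simp
  show ?thesis
    unfolding lower_LD_def upper_LD_def laplace_right_uminus laplace_left_uminus
    by (simp add: max Liminf)
qed

lemma continuous_on_uminus_iff:
  fixes f :: "'a::topological_space \<Rightarrow> 'b::real_normed_vector"
  shows "continuous_on S (\<lambda>x. - f x) \<longleftrightarrow> continuous_on S f"
  using continuous_on_minus[of S "\<lambda>x. - f x"] continuous_on_minus[of S f] by auto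

lemma laplace_minor_iff_major_uminus:
  "laplace_minor a b f V \<longleftrightarrow> laplace_major a b (\<lambda>x. - f x) (\<lambda>x. - V x)"
proof -
  have "ereal (- r) \<le> - L \<longleftrightarrow> L \<le> ereal r" "- \<infinity> < - L \<longleftrightarrow> L < \<infinity>" for r and L :: ereal
    by (cases L; simp)+
  then show ?thesis
    unfolding laplace_minor_def laplace_major_def lower_LD_uminus continuous_on_uminus_iff by simp
qed

lemma laplace_major_iff:
  assumes "a < b"
  shows "laplace_major a b f U \<longleftrightarrow> continuous_on {a..b} U \<and>
    (\<forall>x. a \<le> x \<and> x < b \<longrightarrow> ereal (f x) \<le> Liminf at_top (\<lambda>s. ereal (laplace_right b U x s))) \<and>
    (\<forall>x. a < x \<and> x \<le> b \<longrightarrow> ereal (f x) \<le> Liminf at_top (\<lambda>s. ereal (laplace_left a U x s)))"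
proof -
  have finite: "ereal r \<le> L \<Longrightarrow> - \<infinity> < L" for r and L :: ereal
    by (cases L) auto
  have "(ereal (f x) \<le> lower_LD a b U x \<and> - \<infinity> < lower_LD a b U x) \<longleftrightarrow>
      (x < b \<longrightarrow> ereal (f x) \<le> Liminf at_top (\<lambda>s. ereal (laplace_right b U x s))) \<and>
      (a < x \<longrightarrow> ereal (f x) \<le> Liminf at_top (\<lambda>s. ereal (laplace_left a U x s)))"
    if "x \<in> {a..b}" for x
    using that assms finite unfolding lower_LD_def by auto
  then show ?thesis
    unfolding laplace_major_def by (auto simp: Ball_def)
qed

lemma laplace_minor_iff:
  assumes "a < b"
  shows "laplace_minor a b f V \<longleftrightarrow> continuous_on {a..b} V \<and>
    (\<forall>x. a \<le> x \<and> x < b \<longrightarrow> Limsup at_top (\<lambda>s. ereal (laplace_right b V x s)) \<le> ereal (f x)) \<and>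
    (\<forall>x. a < x \<and> x \<le> b \<longrightarrow> Limsup at_top (\<lambda>s. ereal (laplace_left a V x s)) \<le> ereal (f x))"
proof -
  have "ereal (- r) \<le> - L \<longleftrightarrow> L \<le> ereal r" for r and L :: ereal
    by (cases L; simp)
  then show ?thesis
    unfolding laplace_minor_iff_major_uminus laplace_major_iff[OF assms] continuous_on_uminus_iff
      laplace_right_uminus laplace_left_uminus
    using ereal_Liminf_uminus[of at_top "\<lambda>s. ereal (laplace_right b V x s)" for x]
      ereal_Liminf_uminus[of at_top "\<lambda>s. ereal (laplace_left a V x s)" for x]
    by simp
qed

lemma laplace_major_diff_const: "laplace_major a b f U \<Longrightarrow> laplace_major a b f (\<lambda>y. U y - k)"
  unfolding laplace_major_def lower_LD_def laplace_right_diff_const laplace_left_diff_const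
  by (auto intro: continuous_on_diff continuous_on_const)

lemma laplace_minor_diff_const: "laplace_minor a b f V \<Longrightarrow> laplace_minor a b f (\<lambda>y. V y - k)"
  unfolding laplace_minor_def upper_LD_def laplace_right_diff_const laplace_left_diff_const
  by (auto intro: continuous_on_diff continuous_on_const)

lemma ereal_le_Liminf_realI:
  assumes "\<And>\<delta>. \<delta> > 0 \<Longrightarrow> eventually (\<lambda>s. c - \<delta> < X s) F"
  shows "ereal c \<le> Liminf F (\<lambda>s. ereal (X s))"
  unfolding le_Liminf_iff
proof (intro allI impI)
  fix z assume "z < ereal c"
  then show "eventually (\<lambda>s. z < ereal (X s)) F"
  proof (cases z)
    case (real r)
    with assms[of "c - r"] \<open>z < ereal c\<close> show ?thesis by simp
  qed auto
qed

lemma Liminf_lincomb_ge: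
  fixes A B C :: "'a \<Rightarrow> real"
  assumes "\<alpha> \<ge> 0" "\<beta> \<ge> 0"
    and A: "ereal y \<le> Liminf F (\<lambda>s. ereal (A s))"
    and B: "Limsup F (\<lambda>s. ereal (B s)) \<le> ereal y"
    and C: "((\<lambda>s. C s - (\<alpha> * A s - \<beta> * B s)) \<longlongrightarrow> 0) F"
  shows "ereal ((\<alpha> - \<beta>) * y) \<le> Liminf F (\<lambda>s. ereal (C s))"
proof (rule ereal_le_Liminf_realI)
  fix \<delta> :: real assume "\<delta> > 0"
  define \<eta> where "\<eta> = \<delta> / (2 * (\<alpha> + \<beta> + 1))"
  have "\<eta> > 0" "(\<alpha> + \<beta>) * \<eta> < \<delta> / 2"
    unfolding \<eta>_def using \<open>\<delta> > 0\<close> \<open>\<alpha> \<ge> 0\<close> \<open>\<beta> \<ge> 0\<close> by (auto simp: field_simps)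
  have "eventually (\<lambda>s. y - \<eta> < A s) F"
    using A \<open>\<eta> > 0\<close> unfolding le_Liminf_iff by (auto dest: spec[of _ "ereal (y - \<eta>)"])
  moreover have "eventually (\<lambda>s. B s < y + \<eta>) F"
    using B \<open>\<eta> > 0\<close> unfolding Limsup_le_iff by (auto dest: spec[of _ "ereal (y + \<eta>)"])
  moreover have "eventually (\<lambda>s. \<bar>C s - (\<alpha> * A s - \<beta> * B s)\<bar> < \<delta> / 2) F"
    using tendstoD[OF C, of "\<delta> / 2"] \<open>\<delta> > 0\<close> by (simp add: dist_real_def)
  ultimately show "eventually (\<lambda>s. (\<alpha> - \<beta>) * y - \<delta> < C s) F"
  proof eventually_elim
    case (elim s)
    have "\<alpha> * (y - \<eta>) \<le> \<alpha> * A s" "\<beta> * B s \<le> \<beta> * (y + \<eta>)"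
      using elim \<open>\<alpha> \<ge> 0\<close> \<open>\<beta> \<ge> 0\<close> by (auto intro: mult_left_mono)
    moreover have "\<alpha> * A s - \<beta> * B s - \<delta> / 2 < C s"
      using elim(3) unfolding abs_less_iff by linarith
    moreover have "\<alpha> * (y - \<eta>) - \<beta> * (y + \<eta>) = (\<alpha> - \<beta>) * y - (\<alpha> + \<beta>) * \<eta>"
      by (simp add: algebra_simps)
    ultimately show ?case
      using \<open>(\<alpha> + \<beta>) * \<eta> < \<delta> / 2\<close> by linarith
  qed
qed

lemma eventually_laplace_right_less:
  fixes F :: "real \<Rightarrow> real"
  assumes F: "continuous_on {a..b} F" and "a \<le> x" "x < d" "d \<le> b" "\<epsilon> > 0"
    and decrease: "\<And>t. t \<in> {0..d - x} \<Longrightarrow> F (x + t) - F x \<le> - \<epsilon> * t"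
  shows "eventually (\<lambda>s. laplace_right b F x s < - \<epsilon> / 4) at_top"
proof -
  define R where "R t = F (x + t) - F x + \<epsilon> * t" for t
  have R: "continuous_on {0..b - x} R"
    unfolding R_def using \<open>a \<le> x\<close>
    by (intro continuous_on_add[OF continuous_on_right_increment[OF F]] continuous_intros) auto
  have R_nonpos: "R t \<le> 0 * t" if "t \<in> {0..b - x}" "t \<le> d - x" for t
    using decrease[of t] that unfolding R_def by simp
  have quotient_R: "laplace_quotient (b - x) R s
      = laplace_right b F x s + \<epsilon> * laplace_quotient (b - x) (\<lambda>t. t) s" for s
    using laplace_quotient_add[OF continuous_on_right_increment[OF F]
        continuous_on_mult_left[OF continuous_on_id], of x \<epsilon> s] \<open>a \<le> x\<close>
    unfolding R_def laplace_right_eq_quotient laplace_quotient_cmult by simp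
  have "eventually (\<lambda>s. laplace_quotient (b - x) R s \<le> 0 + \<epsilon> / 4) at_top"
    using assms by (intro eventually_laplace_quotient_le[OF _ R _ _ R_nonpos]) auto
  moreover have "eventually (\<lambda>s. 1 / 2 < laplace_quotient (b - x) (\<lambda>t. t) s) at_top"
    using assms by (intro order_tendstoD(1)[OF laplace_quotient_ident_tendsto_1]) auto
  ultimately show ?thesis
  proof eventually_elim
    case (elim s)
    then have "\<epsilon> * (1 / 2) < \<epsilon> * laplace_quotient (b - x) (\<lambda>t. t) s"
      using \<open>\<epsilon> > 0\<close> by (intro mult_strict_left_mono) auto
    then show ?case using elim quotient_R[of s] by linarith
  qed
qed

lemma obtain_strict_max_on_right:
  fixes H :: "real \<Rightarrow> real"
  assumes "continuous_on {c..d} H" "c \<le> d" "H d < H c"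
  obtains x where "c \<le> x" "x < d" "\<And>y. x < y \<Longrightarrow> y \<le> d \<Longrightarrow> H y < H x"
proof -
  define S where "S = {c..d} \<inter> H -` {H c..}"
  have "closed S"
    unfolding S_def by (intro continuous_closed_preimage assms(1)) auto
  moreover have "c \<in> S" "bdd_above S"
    using \<open>c \<le> d\<close> unfolding S_def by auto
  ultimately have "Sup S \<in> S" by (intro closed_contains_Sup) auto
  then have x: "c \<le> Sup S" "Sup S \<le> d" "H c \<le> H (Sup S)"
    unfolding S_def by auto
  with \<open>H d < H c\<close> have "Sup S < d" by (cases "Sup S = d") auto
  moreover have "H y < H (Sup S)" if "Sup S < y" "y \<le> d" for y
    using cSup_upper[OF _ \<open>bdd_above S\<close>, of y] that x unfolding S_def by force
  ultimately show thesis using that x by blast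
qed

text \<open>If \<open>F\<close> decreased on \<open>[c, d]\<close>, then so would \<open>H y = F y + \<epsilon> y\<close> for small \<open>\<epsilon> > 0\<close>.  To the
  right of a point \<open>x\<close> where \<open>H\<close> exceeds all its later values, \<open>F\<close> falls with slope at least \<open>\<epsilon>\<close>,
  which keeps the right Laplace quotients of \<open>F\<close> at \<open>x\<close> below \<open>- \<epsilon> / 4\<close>.\<close>

lemma mono_on_if_laplace_right_nonneg:
  fixes F :: "real \<Rightarrow> real"
  assumes F: "continuous_on {a..b} F"
    and nonneg: "\<And>x. a \<le> x \<Longrightarrow> x < b \<Longrightarrow> 0 \<le> Liminf at_top (\<lambda>s. ereal (laplace_right b F x s))"
  shows "mono_on {a..b} F"
proof (rule mono_onI, rule ccontr)
  fix c d assume cd: "c \<in> {a..b}" "d \<in> {a..b}" "c \<le> d" and "\<not> F c \<le> F d"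
  then have "c < d" "F d < F c" by (cases "c = d"; simp)+
  define \<epsilon> where "\<epsilon> = (F c - F d) / (2 * (d - c))"
  have "\<epsilon> > 0" unfolding \<epsilon>_def using \<open>c < d\<close> \<open>F d < F c\<close> by simp
  define H where "H y = F y + \<epsilon> * y" for y
  have "\<epsilon> * (d - c) = (F c - F d) / 2"
    unfolding \<epsilon>_def using \<open>c < d\<close> by (simp add: field_simps)
  then have "H d < H c"
    unfolding H_def using \<open>F d < F c\<close> by (simp add: right_diff_distrib)
  moreover have "continuous_on {c..d} H"
    unfolding H_def using cd by (intro continuous_intros continuous_on_subset[OF F]) auto
  ultimately obtain x where x: "c \<le> x" "x < d" "\<And>y. x < y \<Longrightarrow> y \<le> d \<Longrightarrow> H y < H x"
    using obtain_strict_max_on_right \<open>c \<le> d\<close> by blast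
  have "F (x + t) - F x \<le> - \<epsilon> * t" if "t \<in> {0..d - x}" for t
    using x(3)[of "x + t"] that unfolding H_def by (cases "t = 0") (auto simp: distrib_left)
  then have "eventually (\<lambda>s. laplace_right b F x s < - \<epsilon> / 4) at_top"
    using x cd \<open>\<epsilon> > 0\<close> by (intro eventually_laplace_right_less[OF F]) auto
  moreover have "eventually (\<lambda>s. - \<epsilon> / 4 < laplace_right b F x s) at_top"
    using nonneg[of x] x cd \<open>\<epsilon> > 0\<close> unfolding le_Liminf_iff
    by (auto dest!: spec[of _ "ereal (- \<epsilon> / 4)"])
  ultimately have "eventually (\<lambda>s :: real. False) at_top"
    by eventually_elim simp
  then show False unfolding eventually_at_top_linorder by blast
qed

lemma laplace_major_minus_minor_mono:
  assumes "a < b" "laplace_major a b f U" "laplace_minor a b f V"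
  shows "mono_on {a..b} (\<lambda>x. U x - V x)"
proof (rule mono_on_if_laplace_right_nonneg)
  have U: "continuous_on {a..b} U" and V: "continuous_on {a..b} V"
    using assms unfolding laplace_major_def laplace_minor_def by auto
  then show "continuous_on {a..b} (\<lambda>x. U x - V x)" by (intro continuous_intros)
  fix x assume "a \<le> x" "x < b"
  have "ereal ((1 - 1) * f x) \<le> Liminf at_top (\<lambda>s. ereal (laplace_right b (\<lambda>x. U x - V x) x s))"
    using assms \<open>a \<le> x\<close> \<open>x < b\<close>
    by (intro Liminf_lincomb_ge) (auto simp: laplace_right_diff[OF U V] laplace_major_iff laplace_minor_iff)
  then show "0 \<le> Liminf at_top (\<lambda>s. ereal (laplace_right b (\<lambda>x. U x - V x) x s))"
    by (simp add: zero_ereal_def)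
qed

lemma laplace_integrableI:
  assumes "a < b"
    and approx: "\<And>e. e > 0 \<Longrightarrow>
      \<exists>U V. laplace_major a b f U \<and> laplace_minor a b f V \<and> (U b - U a) - (V b - V a) \<le> e"
  shows "laplace_integrable a b f"
proof -
  have upper: "laplace_upper a b f \<le> ereal (U b - U a)" if "laplace_major a b f U" for U
    unfolding laplace_upper_def by (rule INF_lower) (use that in auto)
  have lower: "ereal (V b - V a) \<le> laplace_lower a b f" if "laplace_minor a b f V" for V
    unfolding laplace_lower_def by (rule SUP_upper) (use that in auto)
  have "laplace_lower a b f \<le> laplace_upper a b f"
    unfolding laplace_lower_def laplace_upper_def
  proof (intro SUP_least INF_greatest, clarsimp)
    fix U V assume "laplace_major a b f U" "laplace_minor a b f V"
    then have "U a - V a \<le> U b - V b"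
      using \<open>a < b\<close> by (intro mono_onD[OF laplace_major_minus_minor_mono[OF \<open>a < b\<close>]]) auto
    then show "V b - V a \<le> U b - U a" by simp
  qed
  moreover have "laplace_upper a b f \<le> laplace_lower a b f"
  proof (rule ereal_le_epsilon2)
    fix e :: real assume "e > 0"
    obtain U V where UV: "laplace_major a b f U" "laplace_minor a b f V" "(U b - U a) - (V b - V a) \<le> e"
      using approx[OF \<open>e > 0\<close>] by blast
    have "laplace_upper a b f \<le> ereal (U b - U a)" by (rule upper[OF UV(1)])
    also have "\<dots> \<le> ereal (V b - V a) + ereal e" using UV(3) by simp
    also have "\<dots> \<le> laplace_lower a b f + ereal e" by (intro add_right_mono lower[OF UV(2)])
    finally show "laplace_upper a b f \<le> laplace_lower a b f + ereal e" .
  qed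
  ultimately have eq: "laplace_lower a b f = laplace_upper a b f" by (rule antisym)
  obtain U V where UV: "laplace_major a b f U" "laplace_minor a b f V"
    using approx[of 1] by auto
  have "laplace_upper a b f \<le> ereal (U b - U a)" by (rule upper[OF UV(1)])
  moreover have "ereal (V b - V a) \<le> laplace_upper a b f"
    unfolding eq[symmetric] by (rule lower[OF UV(2)])
  ultimately have "\<bar>laplace_upper a b f\<bar> \<noteq> \<infinity>" by (cases "laplace_upper a b f") auto
  with eq show ?thesis unfolding laplace_integrable_def by simp
qed

lemma laplace_integral_bounds:
  assumes "laplace_integrable a b f" "laplace_major a b f U" "laplace_minor a b f V"
  shows "V b - V a \<le> laplace_integral a b f" "laplace_integral a b f \<le> U b - U a"
proof -
  have eq: "laplace_lower a b f = laplace_upper a b f" and fin: "\<bar>laplace_upper a b f\<bar> \<noteq> \<infinity>"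
    using assms(1) unfolding laplace_integrable_def by auto
  have "laplace_upper a b f \<le> ereal (U b - U a)"
    unfolding laplace_upper_def by (rule INF_lower) (use assms in auto)
  moreover have "ereal (V b - V a) \<le> laplace_upper a b f"
    unfolding eq[symmetric] laplace_lower_def by (rule SUP_upper) (use assms in auto)
  ultimately show "V b - V a \<le> laplace_integral a b f" "laplace_integral a b f \<le> U b - U a"
    unfolding laplace_integral_def using fin by (cases "laplace_upper a b f"; auto)+
qed

lemma laplace_integrable_approx:
  assumes "laplace_integrable a b f" "\<epsilon> > 0"
  obtains U V where "laplace_major a b f U" "laplace_minor a b f V" "U a = 0" "V a = 0" "U b - V b \<le> \<epsilon>"
proof -
  obtain I where I: "laplace_upper a b f = ereal I" "laplace_lower a b f = ereal I"
    using assms(1) unfolding laplace_integrable_def by force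
  have "laplace_upper a b f < ereal (I + \<epsilon> / 2)" using I \<open>\<epsilon> > 0\<close> by simp
  then obtain U where U: "laplace_major a b f U" "U b - U a < I + \<epsilon> / 2"
    unfolding laplace_upper_def by (auto simp: INF_less_iff)
  have "ereal (I - \<epsilon> / 2) < laplace_lower a b f" using I \<open>\<epsilon> > 0\<close> by simp
  then obtain V where V: "laplace_minor a b f V" "I - \<epsilon> / 2 < V b - V a"
    unfolding laplace_lower_def by (auto simp: less_SUP_iff)
  show thesis
    by (rule that[OF laplace_major_diff_const[OF U(1)] laplace_minor_diff_const[OF V(1)]])
      (use U(2) V(2) in auto)
qed

section \<open>Products with indefinite integrals\<close>

lemma integrable_continuous_mult_bounded:
  fixes U g :: "real \<Rightarrow> real"
  assumes U: "continuous_on {a..b} U" and g: "g integrable_on {a..b}" "\<And>u. u \<in> {a..b} \<Longrightarrow> \<bar>g u\<bar> \<le> K"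
  shows "(\<lambda>u. U u * g u) integrable_on {a..b}"
proof -
  have "g absolutely_integrable_on {a..b}"
    using g by (intro absolutely_integrable_integrable_bound[where g = "\<lambda>_. K"]) auto
  moreover have "U \<in> borel_measurable (lebesgue_on {a..b})"
    by (rule continuous_imp_measurable_on_sets_lebesgue[OF U]) auto
  moreover have "bounded (U ` {a..b})"
    by (intro compact_imp_bounded compact_continuous_image U compact_Icc)
  ultimately have "(\<lambda>u. U u * g u) absolutely_integrable_on {a..b}"
    by (intro absolutely_integrable_bounded_measurable_product_real) auto
  then show ?thesis using set_lebesgue_integral_eq_integral(1) by blast
qed

lemma abs_integral_le_bound:
  fixes h :: "real \<Rightarrow> real"
  assumes "h integrable_on {p..q}" "\<And>u. u \<in> {p..q} \<Longrightarrow> \<bar>h u\<bar> \<le> K" "p \<le> q"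
  shows "\<bar>integral {p..q} h\<bar> \<le> K * (q - p)"
  using integrable_bound[where B = K and f = h and a = p and b = q] assms by force

lemma integral_combine_diff:
  fixes h :: "real \<Rightarrow> real"
  assumes "h integrable_on {a..b}" "a \<le> p" "p \<le> q" "q \<le> b"
  shows "integral {a..q} h - integral {a..p} h = integral {p..q} h"
  using Henstock_Kurzweil_Integration.integral_combine[of a p q h] integrable_on_subinterval[OF assms(1), of a q] assms by simp

lemma abs_const_mult_integral_diff_le:
  fixes U g :: "real \<Rightarrow> real"
  assumes "g integrable_on {p..q}" "(\<lambda>u. U u * g u) integrable_on {p..q}" "p \<le> q"
    and "\<And>u. u \<in> {p..q} \<Longrightarrow> \<bar>g u\<bar> \<le> K" "\<And>u. u \<in> {p..q} \<Longrightarrow> \<bar>U u - c\<bar> \<le> \<eta>"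
  shows "\<bar>c * integral {p..q} g - integral {p..q} (\<lambda>u. U u * g u)\<bar> \<le> \<eta> * K * (q - p)"
proof -
  have "c * integral {p..q} g - integral {p..q} (\<lambda>u. U u * g u) = integral {p..q} (\<lambda>u. (c - U u) * g u)"
    using assms(1,2) by (simp add: left_diff_distrib integral_diff integrable_on_mult_right)
  also have "\<bar>\<dots>\<bar> \<le> \<eta> * K * (q - p)"
  proof (rule abs_integral_le_bound)
    show "(\<lambda>u. (c - U u) * g u) integrable_on {p..q}"
      using assms(1,2) by (simp add: left_diff_distrib integrable_diff integrable_on_mult_right)
    show "\<bar>(c - U u) * g u\<bar> \<le> \<eta> * K" if "u \<in> {p..q}" for u
      using assms(4,5)[OF that] unfolding abs_mult by (intro mult_mono) auto
  qed fact
  finally show ?thesis .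
qed

lemma abs_mult_integral_increment_le:
  fixes U g :: "real \<Rightarrow> real"
  assumes U: "continuous_on {a..b} U"
    and g: "g integrable_on {a..b}" "\<And>u. u \<in> {a..b} \<Longrightarrow> \<bar>g u\<bar> \<le> K"
    and "x \<in> {a..b}" "y \<in> {a..b}" and near: "\<And>u. u \<in> {min x y..max x y} \<Longrightarrow> \<bar>U u - U y\<bar> \<le> \<eta>"
  shows "\<bar>U y * (integral {a..y} g - integral {a..x} g)
    - (integral {a..y} (\<lambda>u. U u * g u) - integral {a..x} (\<lambda>u. U u * g u))\<bar> \<le> \<eta> * K * \<bar>y - x\<bar>"
proof -
  have Ug: "(\<lambda>u. U u * g u) integrable_on {a..b}"
    by (rule integrable_continuous_mult_bounded[OF U g])
  have "\<bar>U y * (integral {a..y} g - integral {a..x} g)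
      - (integral {a..y} (\<lambda>u. U u * g u) - integral {a..x} (\<lambda>u. U u * g u))\<bar>
      = \<bar>U y * integral {min x y..max x y} g - integral {min x y..max x y} (\<lambda>u. U u * g u)\<bar>"
    using assms(4,5) integral_combine_diff[OF g(1), of x y] integral_combine_diff[OF Ug, of x y]
      integral_combine_diff[OF g(1), of y x] integral_combine_diff[OF Ug, of y x]
    by (cases "x \<le> y") (auto simp: algebra_simps min_def max_def abs_minus_commute)
  also have "\<dots> \<le> \<eta> * K * (max x y - min x y)"
    using assms(4,5) near
    by (intro abs_const_mult_integral_diff_le integrable_on_subinterval[OF g(1)]
        integrable_on_subinterval[OF Ug] g(2)) (auto simp: min_def max_def split: if_splits)
  also have "\<dots> = \<eta> * K * \<bar>y - x\<bar>" by (simp add: min_def max_def)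
  finally show ?thesis .
qed

text \<open>First-order integration by parts: near \<open>x\<close>, \<open>U G - \<integral>U g\<close> (with \<open>G = \<integral>g\<close>) varies like
  \<open>G x \<cdot> U\<close>, although neither \<open>U\<close> nor \<open>G\<close> need be differentiable.\<close>

lemma mult_integral_minus_integral_mult_has_real_derivative_0:
  fixes U g :: "real \<Rightarrow> real"
  assumes U: "continuous_on {a..b} U"
    and g: "g integrable_on {a..b}" "\<And>u. u \<in> {a..b} \<Longrightarrow> \<bar>g u\<bar> \<le> K"
    and "x \<in> {a..b}"
  shows "((\<lambda>y. U y * integral {a..y} g - integral {a..y} (\<lambda>u. U u * g u) - integral {a..x} g * U y)
    has_real_derivative 0) (at x within {a..b})"
proof -
  define D where "D y = U y * integral {a..y} g - integral {a..y} (\<lambda>u. U u * g u) - integral {a..x} g * U y" for y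
  have "K \<ge> 0" using g(2)[OF \<open>x \<in> {a..b}\<close>] by simp
  have "\<exists>\<delta>>0. \<forall>y\<in>{a..b}. \<bar>y - x\<bar> < \<delta> \<longrightarrow> \<bar>D y - D x\<bar> \<le> e * \<bar>y - x\<bar>" if "e > 0" for e
  proof -
    define \<eta> where "\<eta> = e / (K + 1)"
    have "\<eta> > 0" "\<eta> * K \<le> e" unfolding \<eta>_def using \<open>e > 0\<close> \<open>K \<ge> 0\<close> by (auto simp: field_simps)
    then obtain \<delta> where "\<delta> > 0" and \<delta>: "\<And>u. u \<in> {a..b} \<Longrightarrow> \<bar>u - x\<bar> < \<delta> \<Longrightarrow> \<bar>U u - U x\<bar> < \<eta> / 2"
      using U \<open>x \<in> {a..b}\<close> unfolding continuous_on_iff dist_real_def by (metis half_gt_zero)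
    have "\<bar>D y - D x\<bar> \<le> e * \<bar>y - x\<bar>" if y: "y \<in> {a..b}" "\<bar>y - x\<bar> < \<delta>" for y
    proof -
      have near: "\<bar>U u - U y\<bar> \<le> \<eta>" if "u \<in> {min x y..max x y}" for u
      proof -
        have "u \<in> {a..b}" "\<bar>u - x\<bar> < \<delta>"
          using that y \<open>x \<in> {a..b}\<close> by (auto simp: min_def max_def split: if_splits)
        then have "\<bar>U u - U x\<bar> < \<eta> / 2" by (rule \<delta>)
        then show ?thesis using \<delta>[OF y] by linarith
      qed
      have "\<bar>D y - D x\<bar> \<le> \<eta> * K * \<bar>y - x\<bar>"
        using abs_mult_integral_increment_le[OF U g \<open>x \<in> {a..b}\<close> y(1) near]
        unfolding D_def by (simp add: algebra_simps)
      also have "\<dots> \<le> e * \<bar>y - x\<bar>"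
        using \<open>\<eta> * K \<le> e\<close> by (rule mult_right_mono) simp
      finally show ?thesis .
    qed
    with \<open>\<delta> > 0\<close> show ?thesis by blast
  qed
  then have "(D has_real_derivative 0) (at x within {a..b})"
    unfolding has_field_derivative_def has_derivative_within_alt by (auto intro!: bounded_linear_intros)
  then show ?thesis unfolding D_def .
qed

lemma laplace_major_of_first_order_comparison:
  fixes f U V W k :: "real \<Rightarrow> real"
  assumes "a < b" and U: "laplace_major a b f U" and V: "laplace_minor a b f V"
    and W: "continuous_on {a..b} W" and "c \<ge> 0" and k: "\<And>x. x \<in> {a..b} \<Longrightarrow> k x \<ge> 0"
    and W_U: "\<And>x. x \<in> {a..b} \<Longrightarrow> ((\<lambda>y. W y - k x * U y) has_real_derivative 0) (at x within {a..b})"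
  shows "laplace_major a b (\<lambda>x. (k x - c) * f x) (\<lambda>y. W y - c * V y)"
proof -
  have cU: "continuous_on {a..b} U" and cV: "continuous_on {a..b} V"
    using U V unfolding laplace_major_def laplace_minor_def by auto
  show ?thesis
    unfolding laplace_major_iff[OF \<open>a < b\<close>]
  proof (intro conjI allI impI)
    show "continuous_on {a..b} (\<lambda>y. W y - c * V y)" by (intro continuous_intros W cV)
  next
    fix x assume x: "a \<le> x \<and> x < b"
    have lin: "laplace_right b (\<lambda>y. W y - m * Z y) x s = laplace_right b W x s - m * laplace_right b Z x s"
      if "continuous_on {a..b} Z" for m Z s
      using laplace_right_diff[OF W continuous_on_mult_left[OF that]] x by (simp add: laplace_right_cmult)
    have "((\<lambda>s. laplace_right b (\<lambda>y. W y - k x * U y) x s) \<longlongrightarrow> 0) at_top"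
      using x by (intro laplace_right_tendsto_derivative[OF _ W_U] continuous_intros W cU) auto
    then show "ereal ((k x - c) * f x) \<le> Liminf at_top (\<lambda>s. ereal (laplace_right b (\<lambda>y. W y - c * V y) x s))"
      using U V x k[of x] \<open>c \<ge> 0\<close>
      by (intro Liminf_lincomb_ge) (auto simp: lin cU cV laplace_major_iff laplace_minor_iff \<open>a < b\<close>)
  next
    fix x assume x: "a < x \<and> x \<le> b"
    have lin: "laplace_left a (\<lambda>y. W y - m * Z y) x s = laplace_left a W x s - m * laplace_left a Z x s"
      if "continuous_on {a..b} Z" for m Z s
      using laplace_left_diff[OF W continuous_on_mult_left[OF that]] x by (simp add: laplace_left_cmult)
    have "((\<lambda>s. laplace_left a (\<lambda>y. W y - k x * U y) x s) \<longlongrightarrow> 0) at_top"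
      using x by (intro laplace_left_tendsto_derivative[OF _ W_U] continuous_intros W cU) auto
    then show "ereal ((k x - c) * f x) \<le> Liminf at_top (\<lambda>s. ereal (laplace_left a (\<lambda>y. W y - c * V y) x s))"
      using U V x k[of x] \<open>c \<ge> 0\<close>
      by (intro Liminf_lincomb_ge) (auto simp: lin cU cV laplace_major_iff laplace_minor_iff \<open>a < b\<close>)
  qed
qed

text \<open>Product rule for Laplace derivates: for \<open>G = \<integral>\<^sub>a g\<close>, first-order integration by parts makes
  \<open>U (G + c) - \<integral>\<^sub>a U g - c V\<close> behave near each \<open>x\<close> like \<open>(G x + c) U - c V\<close>.  If \<open>U\<close> is a major
  and \<open>V\<close> a minor function of \<open>f\<close>, and \<open>c \<ge> 0\<close>, \<open>G + c \<ge> 0\<close>, its lower Laplace derivate is thus at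
  least \<open>(G x + c) f x - c f x = G x f x\<close>; swapping \<open>U\<close> and \<open>V\<close> gives a minor function.\<close>

definition mult_integral_bracket ::
    "real \<Rightarrow> real \<Rightarrow> (real \<Rightarrow> real) \<Rightarrow> (real \<Rightarrow> real) \<Rightarrow> (real \<Rightarrow> real) \<Rightarrow> real \<Rightarrow> real" where
  "mult_integral_bracket a c U V g y =
     U y * (integral {a..y} g + c) - integral {a..y} (\<lambda>u. U u * g u) - c * V y"

lemma laplace_major_mult_integral:
  fixes f U V g :: "real \<Rightarrow> real"
  assumes "a < b" and U: "laplace_major a b f U" and V: "laplace_minor a b f V"
    and g: "g integrable_on {a..b}" "\<And>u. u \<in> {a..b} \<Longrightarrow> \<bar>g u\<bar> \<le> K"
    and "c \<ge> 0" and G_c: "\<And>x. x \<in> {a..b} \<Longrightarrow> 0 \<le> integral {a..x} g + c"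
  shows "laplace_major a b (\<lambda>x. f x * integral {a..x} g) (mult_integral_bracket a c U V g)"
proof -
  have cU: "continuous_on {a..b} U"
    using U unfolding laplace_major_def by auto
  define W where "W y = U y * (integral {a..y} g + c) - integral {a..y} (\<lambda>u. U u * g u)" for y
  have "continuous_on {a..b} W"
    unfolding W_def
    by (intro continuous_intros cU indefinite_integral_continuous_1 g(1)
        integrable_continuous_mult_bounded[OF cU g])
  moreover have "((\<lambda>y. W y - (integral {a..x} g + c) * U y) has_real_derivative 0) (at x within {a..b})"
    if "x \<in> {a..b}" for x
    using mult_integral_minus_integral_mult_has_real_derivative_0[OF cU g that]
    unfolding W_def by (simp add: algebra_simps)
  ultimately have "laplace_major a b (\<lambda>x. ((integral {a..x} g + c) - c) * f x) (\<lambda>y. W y - c * V y)"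
    by (intro laplace_major_of_first_order_comparison[OF \<open>a < b\<close> U V _ \<open>c \<ge> 0\<close> G_c])
  then show ?thesis
    unfolding mult_integral_bracket_def W_def by (simp add: mult.commute)
qed

lemma laplace_minor_mult_integral:
  fixes f U V g :: "real \<Rightarrow> real"
  assumes "a < b" and U: "laplace_major a b f U" and V: "laplace_minor a b f V"
    and g: "g integrable_on {a..b}" "\<And>u. u \<in> {a..b} \<Longrightarrow> \<bar>g u\<bar> \<le> K"
    and "c \<ge> 0" and G_c: "\<And>x. x \<in> {a..b} \<Longrightarrow> 0 \<le> integral {a..x} g + c"
  shows "laplace_minor a b (\<lambda>x. f x * integral {a..x} g) (mult_integral_bracket a c V U g)"
proof -
  have "laplace_major a b (\<lambda>x. - f x) (\<lambda>x. - V x)" "laplace_minor a b (\<lambda>x. - f x) (\<lambda>x. - U x)"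
    using U V unfolding laplace_minor_iff_major_uminus by simp_all
  from laplace_major_mult_integral[OF \<open>a < b\<close> this g \<open>c \<ge> 0\<close> G_c]
  show ?thesis
    unfolding laplace_minor_iff_major_uminus mult_integral_bracket_def by (simp add: algebra_simps)
qed

lemma abs_indefinite_integral_le:
  fixes h :: "real \<Rightarrow> real"
  assumes "h integrable_on {a..b}" "\<And>u. u \<in> {a..b} \<Longrightarrow> \<bar>h u\<bar> \<le> K" "x \<in> {a..b}"
  shows "\<bar>integral {a..x} h\<bar> \<le> K * (b - a)"
proof -
  have "\<bar>integral {a..x} h\<bar> \<le> K * (x - a)"
    using assms by (intro abs_integral_le_bound integrable_on_subinterval[OF assms(1)]) auto
  also have "\<dots> \<le> K * (b - a)"
    using assms(2)[OF \<open>x \<in> {a..b}\<close>] \<open>x \<in> {a..b}\<close> by (intro mult_left_mono) auto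
  finally show ?thesis .
qed

lemma mult_integral_bracket_width:
  fixes U V h :: "real \<Rightarrow> real"
  assumes "a \<le> b" and U: "continuous_on {a..b} U" and V: "continuous_on {a..b} V"
    and UV: "\<And>y. y \<in> {a..b} \<Longrightarrow> 0 \<le> U y - V y \<and> U y - V y \<le> \<epsilon>"
    and h: "h integrable_on {a..b}" "\<And>u. u \<in> {a..b} \<Longrightarrow> \<bar>h u\<bar> \<le> K"
  defines "C \<equiv> K * (b - a)"
  shows "mult_integral_bracket a C U V h b - mult_integral_bracket a C V U h b \<le> 4 * \<epsilon> * C"
proof -
  have b: "b \<in> {a..b}" using \<open>a \<le> b\<close> by simp
  have "C \<ge> 0" unfolding C_def using h(2)[OF b] \<open>a \<le> b\<close> by simp
  have Uh: "(\<lambda>u. U u * h u) integrable_on {a..b}"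
    by (rule integrable_continuous_mult_bounded[OF U h])
  have Vh: "(\<lambda>u. V u * h u) integrable_on {a..b}"
    by (rule integrable_continuous_mult_bounded[OF V h])
  have "\<bar>integral {a..b} (\<lambda>u. (U u - V u) * h u)\<bar> \<le> \<epsilon> * K * (b - a)"
  proof (rule abs_integral_le_bound)
    show "(\<lambda>u. (U u - V u) * h u) integrable_on {a..b}"
      using integrable_diff[OF Uh Vh] by (simp add: left_diff_distrib)
    show "\<bar>(U u - V u) * h u\<bar> \<le> \<epsilon> * K" if "u \<in> {a..b}" for u
      unfolding abs_mult using UV[OF that] h(2)[OF that] by (intro mult_mono) auto
  qed fact
  then have "- integral {a..b} (\<lambda>u. (U u - V u) * h u) \<le> \<epsilon> * C"
    unfolding C_def by (simp add: abs_le_iff mult.assoc)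
  moreover have "(U b - V b) * (integral {a..b} h + C) \<le> \<epsilon> * (2 * C)"
    using UV[OF b] abs_indefinite_integral_le[OF h b] \<open>C \<ge> 0\<close> unfolding C_def
    by (intro mult_mono) auto
  moreover have "C * (U b - V b) \<le> C * \<epsilon>"
    using UV[OF b] \<open>C \<ge> 0\<close> by (intro mult_left_mono) auto
  moreover have "integral {a..b} (\<lambda>u. (U u - V u) * h u)
      = integral {a..b} (\<lambda>u. U u * h u) - integral {a..b} (\<lambda>u. V u * h u)"
    using Uh Vh by (simp add: left_diff_distrib integral_diff)
  ultimately show ?thesis
    unfolding mult_integral_bracket_def by (simp add: algebra_simps)
qed

lemma laplace_bracket_mult_integral:
  fixes f U V h :: "real \<Rightarrow> real"
  assumes "a < b" and U: "laplace_major a b f U" and V: "laplace_minor a b f V"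
    and "U a = 0" "V a = 0" "U b - V b \<le> \<epsilon>"
    and h: "h integrable_on {a..b}" "\<And>u. u \<in> {a..b} \<Longrightarrow> \<bar>h u\<bar> \<le> K"
  defines "C \<equiv> K * (b - a)"
  shows "laplace_major a b (\<lambda>x. f x * integral {a..x} h) (mult_integral_bracket a C U V h)"
    and "laplace_minor a b (\<lambda>x. f x * integral {a..x} h) (mult_integral_bracket a C V U h)"
    and "mult_integral_bracket a C U V h a = 0" "mult_integral_bracket a C V U h a = 0"
    and "mult_integral_bracket a C U V h b - mult_integral_bracket a C V U h b \<le> 4 * \<epsilon> * C"
proof -
  have "C \<ge> 0" unfolding C_def using h(2)[of a] \<open>a < b\<close> by auto
  have G_c: "0 \<le> integral {a..x} h + C" if "x \<in> {a..b}" for x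
    using abs_indefinite_integral_le[OF h that] unfolding C_def by linarith
  show "laplace_major a b (\<lambda>x. f x * integral {a..x} h) (mult_integral_bracket a C U V h)"
    by (rule laplace_major_mult_integral[OF \<open>a < b\<close> U V h \<open>C \<ge> 0\<close> G_c])
  show "laplace_minor a b (\<lambda>x. f x * integral {a..x} h) (mult_integral_bracket a C V U h)"
    by (rule laplace_minor_mult_integral[OF \<open>a < b\<close> U V h \<open>C \<ge> 0\<close> G_c])
  show "mult_integral_bracket a C U V h a = 0" "mult_integral_bracket a C V U h a = 0"
    unfolding mult_integral_bracket_def using \<open>U a = 0\<close> \<open>V a = 0\<close> by simp_all
  have "0 \<le> U y - V y \<and> U y - V y \<le> \<epsilon>" if "y \<in> {a..b}" for y
    using mono_onD[OF laplace_major_minus_minor_mono[OF \<open>a < b\<close> U V], of a y]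
      mono_onD[OF laplace_major_minus_minor_mono[OF \<open>a < b\<close> U V], of y b]
      that \<open>U a = 0\<close> \<open>V a = 0\<close> \<open>U b - V b \<le> \<epsilon>\<close> by auto
  moreover have "continuous_on {a..b} U" "continuous_on {a..b} V"
    using U V unfolding laplace_major_def laplace_minor_def by auto
  ultimately show "mult_integral_bracket a C U V h b - mult_integral_bracket a C V U h b \<le> 4 * \<epsilon> * C"
    unfolding C_def using \<open>a < b\<close> by (intro mult_integral_bracket_width h) auto
qed

lemma laplace_integrable_mult_integral:
  fixes f h :: "real \<Rightarrow> real"
  assumes "a < b" "laplace_integrable a b f"
    and h: "h integrable_on {a..b}" "\<And>u. u \<in> {a..b} \<Longrightarrow> \<bar>h u\<bar> \<le> K"
  shows "laplace_integrable a b (\<lambda>x. f x * integral {a..x} h)"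
proof (rule laplace_integrableI[OF \<open>a < b\<close>])
  fix e :: real assume "e > 0"
  define C where "C = K * (b - a)"
  have "C \<ge> 0" unfolding C_def using h(2)[of a] \<open>a < b\<close> by auto
  define \<epsilon> where "\<epsilon> = e / (4 * C + 1)"
  have "\<epsilon> > 0" "4 * \<epsilon> * C \<le> e"
    unfolding \<epsilon>_def using \<open>e > 0\<close> \<open>C \<ge> 0\<close> by (auto simp: field_simps)
  obtain U V where UV: "laplace_major a b f U" "laplace_minor a b f V" "U a = 0" "V a = 0" "U b - V b \<le> \<epsilon>"
    using laplace_integrable_approx[OF assms(2) \<open>\<epsilon> > 0\<close>] by blast
  note bracket = laplace_bracket_mult_integral[OF \<open>a < b\<close> UV h, folded C_def]
  show "\<exists>W Z. laplace_major a b (\<lambda>x. f x * integral {a..x} h) W \<and>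
      laplace_minor a b (\<lambda>x. f x * integral {a..x} h) Z \<and> (W b - W a) - (Z b - Z a) \<le> e"
    using bracket \<open>4 * \<epsilon> * C \<le> e\<close> by fastforce
qed

lemma laplace_integral_mult_integral_uniform_approx:
  fixes f :: "real \<Rightarrow> real"
  assumes "a < b" "laplace_integrable a b f" "e > 0" "K \<ge> 0"
  obtains U V where "continuous_on {a..b} U"
    and "\<And>h. h integrable_on {a..b} \<Longrightarrow> (\<And>u. u \<in> {a..b} \<Longrightarrow> \<bar>h u\<bar> \<le> K) \<Longrightarrow>
      \<bar>laplace_integral a b (\<lambda>x. f x * integral {a..x} h) - mult_integral_bracket a (K * (b - a)) U V h b\<bar> \<le> e"
proof -
  define C where "C = K * (b - a)"
  have "C \<ge> 0" unfolding C_def using assms by simp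
  define \<epsilon> where "\<epsilon> = e / (4 * C + 1)"
  have "\<epsilon> > 0" "4 * \<epsilon> * C \<le> e"
    unfolding \<epsilon>_def using \<open>e > 0\<close> \<open>C \<ge> 0\<close> by (auto simp: field_simps)
  obtain U V where UV: "laplace_major a b f U" "laplace_minor a b f V" "U a = 0" "V a = 0" "U b - V b \<le> \<epsilon>"
    using laplace_integrable_approx[OF assms(2) \<open>\<epsilon> > 0\<close>] by blast
  show thesis
  proof (rule that)
    show "continuous_on {a..b} U" using UV(1) unfolding laplace_major_def by simp
  next
    fix h assume h: "h integrable_on {a..b}" "\<And>u. u \<in> {a..b} \<Longrightarrow> \<bar>h u\<bar> \<le> K"
    note bracket = laplace_bracket_mult_integral[OF \<open>a < b\<close> UV h, folded C_def]
    note bounds = laplace_integral_bounds[OF laplace_integrable_mult_integral[OF assms(1,2) h] bracket(1,2)]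
    show "\<bar>laplace_integral a b (\<lambda>x. f x * integral {a..x} h) - mult_integral_bracket a (K * (b - a)) U V h b\<bar> \<le> e"
      using bounds bracket(3-5) \<open>4 * \<epsilon> * C \<le> e\<close> unfolding C_def[symmetric] by (simp add: abs_le_iff)
  qed
qed

section \<open>Functions of bounded variation\<close>

lemma partitions_snoc:
  assumes "xs \<in> partitions a x" "x < y"
  shows "xs @ [y] \<in> partitions a y"
proof -
  have xs: "xs \<noteq> []" "hd xs = a" "last xs = x" "sorted_wrt (<) xs"
    using assms(1) unfolding partitions_def by auto
  then have split: "xs = butlast xs @ [x]" by (metis append_butlast_last_id)
  then have "sorted_wrt (<) (butlast xs @ [x])" using xs(4) by simp
  then have "\<forall>u\<in>set (butlast xs). u < x" by (simp add: sorted_wrt_append)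
  moreover have "set xs = insert x (set (butlast xs))" by (subst split) simp
  ultimately have "\<forall>u\<in>set xs. u < y" using \<open>x < y\<close> by auto
  then show ?thesis using xs unfolding partitions_def by (auto simp: sorted_wrt_append)
qed

lemma variation_sum_snoc:
  assumes "xs \<noteq> []"
  shows "variation_sum g (xs @ [y]) = variation_sum g xs + \<bar>g y - g (last xs)\<bar>"
proof -
  obtain m where m: "length xs = Suc m" using assms by (cases xs) auto
  have "(\<Sum>i<m. \<bar>g ((xs @ [y]) ! Suc i) - g ((xs @ [y]) ! i)\<bar>) = (\<Sum>i<m. \<bar>g (xs ! Suc i) - g (xs ! i)\<bar>)"
    using m by (intro sum.cong) (auto simp: nth_append)
  then show ?thesis
    unfolding variation_sum_def using m assms by (simp add: nth_append last_conv_nth)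
qed

lemma partitions_nonempty:
  assumes "a \<le> x"
  shows "partitions a x \<noteq> {}"
proof (cases "a = x")
  case True
  then have "[a] \<in> partitions a x" by (simp add: partitions_def)
  then show ?thesis by auto
next
  case False
  then have "[a, x] \<in> partitions a x" using assms by (simp add: partitions_def)
  then show ?thesis by auto
qed

lemma total_variation_nonneg:
  assumes "a \<le> x"
  shows "0 \<le> total_variation g a x"
proof -
  obtain xs where "xs \<in> partitions a x" using partitions_nonempty[OF assms] by blast
  moreover have "0 \<le> variation_sum g xs" unfolding variation_sum_def by (simp add: sum_nonneg)
  ultimately show ?thesis unfolding total_variation_def by (auto intro: SUP_upper2)
qed

lemma total_variation_snoc_le:
  assumes "a \<le> x" "x < y"
  shows "total_variation g a x + ereal \<bar>g y - g x\<bar> \<le> total_variation g a y"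
proof -
  have "total_variation g a x + ereal \<bar>g y - g x\<bar> = (SUP xs\<in>partitions a x. ereal (variation_sum g xs + \<bar>g y - g x\<bar>))"
    unfolding total_variation_def
    using SUP_ereal_add_left[OF partitions_nonempty[OF \<open>a \<le> x\<close>],
        where f = "\<lambda>xs. ereal (variation_sum g xs)" and c = "ereal \<bar>g y - g x\<bar>"]
    by simp
  also have "\<dots> \<le> total_variation g a y"
    unfolding total_variation_def
  proof (rule SUP_least)
    fix xs assume xs: "xs \<in> partitions a x"
    then have "variation_sum g xs + \<bar>g y - g x\<bar> = variation_sum g (xs @ [y])"
      by (simp add: variation_sum_snoc partitions_def)
    then show "ereal (variation_sum g xs + \<bar>g y - g x\<bar>) \<le> (SUP xs\<in>partitions a y. ereal (variation_sum g xs))"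
      using partitions_snoc[OF xs \<open>x < y\<close>] by (auto intro: SUP_upper)
  qed
  finally show ?thesis .
qed

lemma total_variation_mono:
  assumes "a \<le> x" "x \<le> y"
  shows "total_variation g a x \<le> total_variation g a y"
proof (cases "x = y")
  case False
  have "total_variation g a x \<le> total_variation g a x + ereal \<bar>g y - g x\<bar>"
    using add_left_mono[of 0 "ereal \<bar>g y - g x\<bar>" "total_variation g a x"] by simp
  also have "\<dots> \<le> total_variation g a y"
    using False assms by (intro total_variation_snoc_le) auto
  finally show ?thesis .
qed simp

lemma abs_diff_le_total_variation:
  assumes "a \<le> x" "x \<le> b"
  shows "ereal \<bar>g x - g a\<bar> \<le> total_variation g a b"
proof (cases "x = a")
  case False
  have "0 \<le> total_variation g a a" by (rule total_variation_nonneg) simp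
  then have "ereal \<bar>g x - g a\<bar> \<le> total_variation g a a + ereal \<bar>g x - g a\<bar>"
    using add_right_mono[of 0 "total_variation g a a" "ereal \<bar>g x - g a\<bar>"] by simp
  also have "\<dots> \<le> total_variation g a x"
    using False assms by (intro total_variation_snoc_le) auto
  also have "\<dots> \<le> total_variation g a b"
    using assms by (rule total_variation_mono)
  finally show ?thesis .
qed (use assms total_variation_nonneg[of a b g] in \<open>simp add: zero_ereal_def[symmetric]\<close>)

text \<open>Jordan decomposition: \<open>g = v - (v - g)\<close> with \<open>v x\<close> the variation of \<open>g\<close> on \<open>[a, x]\<close>.\<close>

lemma integrable_on_if_bounded_variation_on:
  assumes "bounded_variation_on g a b"
  shows "g integrable_on {a..b}"
proof -
  define v where "v x = real_of_ereal (total_variation g a x)" for x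
  have v: "total_variation g a x = ereal (v x)" if "x \<in> {a..b}" for x
  proof -
    have "0 \<le> total_variation g a x" "total_variation g a x < \<infinity>"
      using that assms total_variation_mono[of a x b g] total_variation_nonneg[of a x g]
      unfolding bounded_variation_on_def by auto
    then show ?thesis unfolding v_def by (cases "total_variation g a x") auto
  qed
  have jump: "v x + \<bar>g y - g x\<bar> \<le> v y" if "x \<in> {a..b}" "y \<in> {a..b}" "x \<le> y" for x y
    using total_variation_snoc_le[of a x y g] v that by (cases "x = y") auto
  have "mono_on {a..b} v" "mono_on {a..b} (\<lambda>x. v x - g x)"
    using jump by (force intro!: mono_onI)+
  then have "(\<lambda>x. v x - (v x - g x)) integrable_on {a..b}"
    by (intro integrable_diff integrable_on_mono_on)
  then show ?thesis by simp
qed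

lemma uniform_bound_of_total_variation_bound:
  fixes gs :: "nat \<Rightarrow> real \<Rightarrow> real"
  assumes "\<And>n. total_variation (gs n) a b \<le> ereal M" "convergent (\<lambda>n. gs n a)"
  obtains K where "\<And>n x. x \<in> {a..b} \<Longrightarrow> \<bar>gs n x\<bar> \<le> K"
proof -
  obtain A where A: "\<And>n. \<bar>gs n a\<bar> \<le> A"
    using convergent_imp_Bseq[OF assms(2)] unfolding Bseq_def by auto
  have "\<bar>gs n x\<bar> \<le> A + M" if "x \<in> {a..b}" for n x
  proof -
    have "ereal \<bar>gs n x - gs n a\<bar> \<le> ereal M"
      using that by (intro order_trans[OF abs_diff_le_total_variation assms(1)]) auto
    then show ?thesis using A[of n] by simp
  qed
  then show thesis by (rule that)
qed

section \<open>Bounded convergence\<close>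

lemma bounded_convergence_integral:
  fixes h :: "nat \<Rightarrow> real \<Rightarrow> real"
  assumes "\<And>n. h n integrable_on {a..b}" "\<And>n x. x \<in> {a..b} \<Longrightarrow> \<bar>h n x\<bar> \<le> K"
    and "\<And>x. x \<in> {a..b} \<Longrightarrow> (\<lambda>n. h n x) \<longlonglongrightarrow> l x"
  shows "l integrable_on {a..b}" "(\<lambda>n. integral {a..b} (h n)) \<longlonglongrightarrow> integral {a..b} l"
  using dominated_convergence[of h "{a..b}" "\<lambda>_. K" l] assms by auto

lemma mult_integral_bracket_tendsto:
  fixes U :: "real \<Rightarrow> real" and gs :: "nat \<Rightarrow> real \<Rightarrow> real"
  assumes U: "continuous_on {a..b} U"
    and gs: "\<And>n. gs n integrable_on {a..b}" "\<And>n x. x \<in> {a..b} \<Longrightarrow> \<bar>gs n x\<bar> \<le> K"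
      "\<And>x. x \<in> {a..b} \<Longrightarrow> (\<lambda>n. gs n x) \<longlonglongrightarrow> g x"
  shows "(\<lambda>n. mult_integral_bracket a c U V (gs n) b) \<longlonglongrightarrow> mult_integral_bracket a c U V g b"
proof -
  obtain B where B: "\<And>u. u \<in> {a..b} \<Longrightarrow> \<bar>U u\<bar> \<le> B"
    using compact_imp_bounded[OF compact_continuous_image[OF U compact_Icc]]
    unfolding bounded_iff by (metis image_eqI real_norm_def)
  have "(\<lambda>n. integral {a..b} (\<lambda>u. U u * gs n u)) \<longlonglongrightarrow> integral {a..b} (\<lambda>u. U u * g u)"
  proof (rule bounded_convergence_integral(2))
    show "(\<lambda>u. U u * gs n u) integrable_on {a..b}" for n
      by (rule integrable_continuous_mult_bounded[OF U gs(1,2)])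
    show "\<bar>U u * gs n u\<bar> \<le> B * K" if "u \<in> {a..b}" for n u
      unfolding abs_mult using B[OF that] gs(2)[OF that] by (intro mult_mono) auto
  qed (intro tendsto_mult tendsto_const gs(3))
  then show ?thesis
    unfolding mult_integral_bracket_def
    by (intro tendsto_intros bounded_convergence_integral(2)[OF gs])
qed

lemma LIMSEQ_of_approximations:
  fixes X :: "nat \<Rightarrow> real"
  assumes "\<And>e. e > 0 \<Longrightarrow> \<exists>Y y. Y \<longlonglongrightarrow> y \<and> (\<forall>n. \<bar>X n - Y n\<bar> \<le> e) \<and> \<bar>l - y\<bar> \<le> e"
  shows "X \<longlonglongrightarrow> l"
proof (rule LIMSEQ_I)
  fix r :: real assume "r > 0"
  then obtain Y y where "Y \<longlonglongrightarrow> y" and XY: "\<And>n. \<bar>X n - Y n\<bar> \<le> r / 4" and "\<bar>l - y\<bar> \<le> r / 4"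
    using assms[of "r / 4"] by auto
  moreover obtain N where N: "\<And>n. n \<ge> N \<Longrightarrow> \<bar>Y n - y\<bar> < r / 4"
    using LIMSEQ_D[OF \<open>Y \<longlonglongrightarrow> y\<close>, of "r / 4"] \<open>r > 0\<close> by auto
  ultimately have "\<bar>X n - l\<bar> < r" if "n \<ge> N" for n
    using XY[of n] N[OF that] \<open>\<bar>l - y\<bar> \<le> r / 4\<close> \<open>r > 0\<close> by linarith
  then show "\<exists>N. \<forall>n\<ge>N. norm (X n - l) < r" by auto
qed

lemma laplace_integral_mult_integral_bounded_convergence:
  fixes f g :: "real \<Rightarrow> real" and gs :: "nat \<Rightarrow> real \<Rightarrow> real"
  assumes "a < b" and f: "laplace_integrable a b f"
    and gs: "\<And>n. gs n integrable_on {a..b}" "\<And>n x. x \<in> {a..b} \<Longrightarrow> \<bar>gs n x\<bar> \<le> K"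
    and lim: "\<And>x. x \<in> {a..b} \<Longrightarrow> (\<lambda>n. gs n x) \<longlonglongrightarrow> g x"
  shows "\<And>n. laplace_integrable a b (\<lambda>x. f x * integral {a..x} (gs n))"
    and "laplace_integrable a b (\<lambda>x. f x * integral {a..x} g)"
    and "(\<lambda>n. laplace_integral a b (\<lambda>x. f x * integral {a..x} (gs n)))
      \<longlonglongrightarrow> laplace_integral a b (\<lambda>x. f x * integral {a..x} g)"
proof -
  have g_K: "\<bar>g x\<bar> \<le> K" if "x \<in> {a..b}" for x
    using gs(2)[OF that] by (intro tendsto_upperbound[OF tendsto_rabs[OF lim[OF that]]]) auto
  have g: "g integrable_on {a..b}" by (rule bounded_convergence_integral(1)[OF gs lim])
  show "\<And>n. laplace_integrable a b (\<lambda>x. f x * integral {a..x} (gs n))"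
    by (rule laplace_integrable_mult_integral[OF \<open>a < b\<close> f gs])
  show "laplace_integrable a b (\<lambda>x. f x * integral {a..x} g)"
    by (rule laplace_integrable_mult_integral[OF \<open>a < b\<close> f g g_K])
  show "(\<lambda>n. laplace_integral a b (\<lambda>x. f x * integral {a..x} (gs n)))
      \<longlonglongrightarrow> laplace_integral a b (\<lambda>x. f x * integral {a..x} g)"
  proof (rule LIMSEQ_of_approximations)
    fix e :: real assume "e > 0"
    have "K \<ge> 0" using g_K[of a] \<open>a < b\<close> by auto
    obtain U V where U: "continuous_on {a..b} U" and approx: "\<And>h. h integrable_on {a..b} \<Longrightarrow>
        (\<And>u. u \<in> {a..b} \<Longrightarrow> \<bar>h u\<bar> \<le> K) \<Longrightarrow> \<bar>laplace_integral a b (\<lambda>x. f x * integral {a..x} h)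
          - mult_integral_bracket a (K * (b - a)) U V h b\<bar> \<le> e"
      using laplace_integral_mult_integral_uniform_approx[OF \<open>a < b\<close> f \<open>e > 0\<close> \<open>K \<ge> 0\<close>] by blast
    show "\<exists>Y y. Y \<longlonglongrightarrow> y \<and>
        (\<forall>n. \<bar>laplace_integral a b (\<lambda>x. f x * integral {a..x} (gs n)) - Y n\<bar> \<le> e) \<and>
        \<bar>laplace_integral a b (\<lambda>x. f x * integral {a..x} g) - y\<bar> \<le> e"
      using mult_integral_bracket_tendsto[OF U gs lim] approx gs g g_K by blast
  qed
qed

theorem theorem7p3:
  fixes a b :: real and f g :: "real \<Rightarrow> real" and gs :: "nat \<Rightarrow> real \<Rightarrow> real"
  assumes "a < b"
    and "laplace_integrable a b f"
    and "\<And>n. bounded_variation_on (gs n) a b"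
    and "\<exists>M. \<forall>n. total_variation (gs n) a b \<le> ereal M"
    and "\<And>x. x \<in> {a..b} \<Longrightarrow> (\<lambda>n. gs n x) \<longlonglongrightarrow> g x"
  defines "Gs \<equiv> (\<lambda>n x. integral {a..x} (gs n))"
    and "G \<equiv> (\<lambda>x. integral {a..x} g)"
  shows "(\<forall>n. laplace_integrable a b (\<lambda>x. f x * Gs n x))
    \<and> laplace_integrable a b (\<lambda>x. f x * G x)
    \<and> (\<lambda>n. laplace_integral a b (\<lambda>x. f x * Gs n x))
        \<longlonglongrightarrow> laplace_integral a b (\<lambda>x. f x * G x)"
proof -
  have gs: "gs n integrable_on {a..b}" for n
    by (rule integrable_on_if_bounded_variation_on[OF assms(3)])
  have "convergent (\<lambda>n. gs n a)" using assms(5)[of a] \<open>a < b\<close> by (auto intro: convergentI)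
  then obtain K where "\<And>n x. x \<in> {a..b} \<Longrightarrow> \<bar>gs n x\<bar> \<le> K"
    using uniform_bound_of_total_variation_bound assms(4) by metis
  from laplace_integral_mult_integral_bounded_convergence[OF \<open>a < b\<close> assms(2) gs this assms(5)]
  show ?thesis unfolding Gs_def G_def by blast
qed

end
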